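(* If the toric algebra $A_{\mathscr{E}}$ is consistent, then $x^{\operatorname{div}(a)}$ divides $\prod_{\rho\in\sigma(1)}x_\rho$ for every arrow $a\in Q_1$.
   Context: Let $\mathbb{k}$ be an algebraically closed field and $X=\operatorname{Spec}R$ a normal affine toric variety of dimension $n$ with a torus-fixed point, $R=\mathbb{k}[\sigma^\vee\cap M]$, $\sigma\subset N\otimes\mathbb{R}$ strongly convex rational polyhedral. Let $\sigma(1)$ be the rays, $d=|\sigma(1)|$, $v_\rho$ primitive generators, $D_\rho$ toric prime divisors, torus-invariant divisors identified with $\mathbb{Z}^d$, $\deg:\mathbb{Z}^d\to\operatorname{Cl}(X)$ the class map with kernel the image of $M$ under $u\mapsto\sum\langle u,v_\rho\rangle D_\rho$. Cox ring $\mathbb{k}[x_\rho]$, $x^D=\prod x_\rho^{D_\rho}$. Assume $X$ is Gorenstein: $(1,\dots,1)\in\mathbb{Z}^d$ lies in the image of $M$. Let $\mathscr{E}=(E_0=\mathcal{O}_X,E_1,\dots,E_r)$ be pairwise distinct rank one reflexive sheaves, $E_i=\mathcal{O}_X(D_i')$, and $Q$ its quiver of sections: vertices $0,\dots,r$; an arrow $a:i\to j$ with label $\operatorname{div}(a)\in\mathbb{N}^d$ for each irreducible $T_M$-invariant section $x^{\operatorname{div}(a)}$ of $\operatorname{Hom}(E_i,E_j)\cong H^0(\mathcal{O}_X(D_j'-D_i'))$ (irreducible: not in the image of multiplication through any $E_k$, $k\neq i,j$). Paths compose right to left; $\operatorname{div}(p)$ is the sum of labels of arrows of $p$. $J_{\mathscr{E}}$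 is generated by $p^+-p^-$ over pairs of paths with equal head, tail and label; $A_{\mathscr{E}}=\mathbb{k}Q/J_{\mathscr{E}}$. A cycle $p$ is anticanonical if $x^{\operatorname{div}(p)}=\prod_\rho x_\rho$. For a path $q$, $\partial_qW$ is the sum of all paths $p$ with $\mathsf{t}(p)=\mathsf{h}(q)$, $\mathsf{h}(p)=\mathsf{t}(q)$, $x^{\operatorname{div}(p)}=\prod_\rho x_\rho/x^{\operatorname{div}(q)}$. $\mathscr{P}$ is the set of paths $q$ with $\partial_qW$ a sum of precisely two paths sharing neither initial nor final arrow; $J_W$ is generated by $p^+-p^-$ whenever $\partial_qW=p^++p^-$, $q\in\mathscr{P}$. $A_{\mathscr{E}}$ is consistent if $J_W=J_{\mathscr{E}}$. *)

theory Defs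
  imports Complex_Main "HOL-Computational_Algebra.Polynomial"
begin

(* N = M = Z^n, vectors are functions nat => int read on indices < n.
   Rays rho < d with primitive generators  v rho :: nat => int.
   Torus-invariant divisors = Z^d  (functions nat => int read on rho < d).
   Labels in N^d = functions nat => nat vanishing at rho >= d. *)

type_synonym label = "nat \<Rightarrow> nat"
type_synonym arrow = "nat \<times> nat \<times> label"   (* (tail, head, label) *)
type_synonym path  = "nat \<times> arrow list"       (* (tail vertex, arrows in order of traversal) *)

definition pairing :: "nat \<Rightarrow> (nat \<Rightarrow> nat \<Rightarrow> int) \<Rightarrow> (nat \<Rightarrow> int) \<Rightarrow> nat \<Rightarrow> int" where
  "pairing n v u \<rho> = (\<Sum>i<n. u i * v \<rho> i)"

(* the cone generated by the v_rho: v_rho are primitive, strongly convex, each v_rho spans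
   a ray of the cone (not in the cone of the others), and the cone is full-dimensional
   (equivalent to the existence of a torus-fixed point). *)
definition primitive_vec :: "nat \<Rightarrow> (nat \<Rightarrow> int) \<Rightarrow> bool" where
  "primitive_vec n w \<longleftrightarrow> (\<exists>i<n. w i \<noteq> 0) \<and>
     (\<forall>m::int. (\<forall>i<n. m dvd w i) \<longrightarrow> \<bar>m\<bar> = 1)"

definition toric_cone_data :: "nat \<Rightarrow> nat \<Rightarrow> (nat \<Rightarrow> nat \<Rightarrow> int) \<Rightarrow> bool" where
  "toric_cone_data n d v \<longleftrightarrow>
     (\<forall>\<rho><d. primitive_vec n (v \<rho>)) \<and>
     (\<forall>lam::nat \<Rightarrow> real. (\<forall>\<rho><d. lam \<rho> \<ge> 0) \<and> (\<forall>i<n. (\<Sum>\<rho><d. lam \<rho> * of_int (v \<rho> i)) = 0)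
          \<longrightarrow> (\<forall>\<rho><d. lam \<rho> = 0)) \<and>
     (\<forall>\<rho><d. \<not> (\<exists>\<mu>::nat \<Rightarrow> real. (\<forall>\<tau><d. \<mu> \<tau> \<ge> 0) \<and>
          (\<forall>i<n. of_int (v \<rho> i) = (\<Sum>\<tau>\<in>{..<d} - {\<rho>}. \<mu> \<tau> * of_int (v \<tau> i))))) \<and>
     (\<forall>x::nat \<Rightarrow> real. \<exists>lam::nat \<Rightarrow> real. \<forall>i<n. x i = (\<Sum>\<rho><d. lam \<rho> * of_int (v \<rho> i)))"

definition gorenstein :: "nat \<Rightarrow> nat \<Rightarrow> (nat \<Rightarrow> nat \<Rightarrow> int) \<Rightarrow> bool" where
  "gorenstein n d v \<longleftrightarrow> (\<exists>u. \<forall>\<rho><d. pairing n v u \<rho> = 1)"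

(* D has trivial class in Cl(X), i.e. D lies in the image of M *)
definition principal :: "nat \<Rightarrow> nat \<Rightarrow> (nat \<Rightarrow> nat \<Rightarrow> int) \<Rightarrow> (nat \<Rightarrow> int) \<Rightarrow> bool" where
  "principal n d v D \<longleftrightarrow> (\<exists>u. \<forall>\<rho><d. D \<rho> = pairing n v u \<rho>)"

(* labels c of T_M-invariant sections x^c of Hom(E_i,E_j) = H^0(O_X(D'_j - D'_i)) *)
definition sec_label :: "nat \<Rightarrow> nat \<Rightarrow> (nat \<Rightarrow> nat \<Rightarrow> int) \<Rightarrow> (nat \<Rightarrow> nat \<Rightarrow> int)
    \<Rightarrow> nat \<Rightarrow> nat \<Rightarrow> label \<Rightarrow> bool" where
  "sec_label n d v D' i j c \<longleftrightarrow> (\<forall>\<rho>\<ge>d. c \<rho> = 0) \<and>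
     principal n d v (\<lambda>\<rho>. int (c \<rho>) - (D' j \<rho> - D' i \<rho>))"

definition irreducible_sec :: "nat \<Rightarrow> nat \<Rightarrow> (nat \<Rightarrow> nat \<Rightarrow> int) \<Rightarrow> nat \<Rightarrow> (nat \<Rightarrow> nat \<Rightarrow> int)
    \<Rightarrow> nat \<Rightarrow> nat \<Rightarrow> label \<Rightarrow> bool" where
  "irreducible_sec n d v r D' i j c \<longleftrightarrow> sec_label n d v D' i j c \<and>
     \<not> (\<exists>k\<le>r. k \<noteq> i \<and> k \<noteq> j \<and> (\<exists>c1 c2. sec_label n d v D' i k c1 \<and> sec_label n d v D' k j c2
            \<and> (\<forall>\<rho>. c \<rho> = c1 \<rho> + c2 \<rho>)))"

(* arrows of the quiver of sections; the label 0 (identity section = trivial path) is excluded *)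
definition arrows :: "nat \<Rightarrow> nat \<Rightarrow> (nat \<Rightarrow> nat \<Rightarrow> int) \<Rightarrow> nat \<Rightarrow> (nat \<Rightarrow> nat \<Rightarrow> int) \<Rightarrow> arrow set" where
  "arrows n d v r D' = {(i, j, c). i \<le> r \<and> j \<le> r \<and> c \<noteq> (\<lambda>_. 0) \<and> irreducible_sec n d v r D' i j c}"

fun ptail :: "path \<Rightarrow> nat" where "ptail (x, as) = x"
fun phead :: "path \<Rightarrow> nat" where "phead (x, as) = (if as = [] then x else fst (snd (last as)))"
fun pdiv :: "path \<Rightarrow> label" where "pdiv (x, as) = (\<lambda>\<rho>. \<Sum>a\<leftarrow>as. snd (snd a) \<rho>)"

fun valid_path :: "nat \<Rightarrow> arrow set \<Rightarrow> path \<Rightarrow> bool" where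
  "valid_path r A (x, as) \<longleftrightarrow> x \<le> r \<and> set as \<subseteq> A \<and> (as \<noteq> [] \<longrightarrow> fst (hd as) = x) \<and>
     (\<forall>k. Suc k < length as \<longrightarrow> fst (snd (as ! k)) = fst (as ! Suc k))"

(* path algebra kQ: finitely supported coefficient functions on valid paths *)
definition path_alg :: "nat \<Rightarrow> arrow set \<Rightarrow> (path \<Rightarrow> 'k::field) set" where
  "path_alg r A = {f. finite {p. f p \<noteq> 0} \<and> (\<forall>p. f p \<noteq> 0 \<longrightarrow> valid_path r A p)}"

(* product f*g : paths compose right to left, so g's path is traversed first *)
fun pmul :: "(path \<Rightarrow> 'k::field) \<Rightarrow> (path \<Rightarrow> 'k) \<Rightarrow> path \<Rightarrow> 'k" where
  "pmul f g (x, as) = (\<Sum>k\<in>{0..length as}. f (phead (x, take k as), drop k as) * g (x, take k as))"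

definition pvec :: "path \<Rightarrow> path \<Rightarrow> 'k::field" where
  "pvec p = (\<lambda>q. if q = p then 1 else 0)"

inductive_set gen_ideal :: "nat \<Rightarrow> arrow set \<Rightarrow> (path \<Rightarrow> 'k::field) set \<Rightarrow> (path \<Rightarrow> 'k) set"
  for r A G where
  gen: "g \<in> G \<Longrightarrow> g \<in> gen_ideal r A G"
| zero: "(\<lambda>_. 0) \<in> gen_ideal r A G"
| add: "f \<in> gen_ideal r A G \<Longrightarrow> g \<in> gen_ideal r A G \<Longrightarrow> (\<lambda>p. f p + g p) \<in> gen_ideal r A G"
| lmul: "f \<in> gen_ideal r A G \<Longrightarrow> a \<in> path_alg r A \<Longrightarrow> pmul a f \<in> gen_ideal r A G"
| rmul: "f \<in> gen_ideal r A G \<Longrightarrow> a \<in> path_alg r A \<Longrightarrow> pmul f a \<in> gen_ideal r A G"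

definition JE_gens :: "nat \<Rightarrow> arrow set \<Rightarrow> (path \<Rightarrow> 'k::field) set" where
  "JE_gens r A = {(\<lambda>x. pvec p x - pvec q x) | p q. valid_path r A p \<and> valid_path r A q \<and>
      ptail p = ptail q \<and> phead p = phead q \<and> pdiv p = pdiv q}"

(* the set of paths appearing in partial_q W *)
definition dW :: "nat \<Rightarrow> nat \<Rightarrow> arrow set \<Rightarrow> path \<Rightarrow> path set" where
  "dW d r A q = {p. valid_path r A p \<and> ptail p = phead q \<and> phead p = ptail q \<and>
      (\<forall>\<rho><d. pdiv p \<rho> + pdiv q \<rho> = 1)}"

definition share_first :: "path \<Rightarrow> path \<Rightarrow> bool" where
  "share_first p q \<longleftrightarrow> snd p \<noteq> [] \<and> snd q \<noteq> [] \<and> hd (snd p) = hd (snd q)"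

definition share_last :: "path \<Rightarrow> path \<Rightarrow> bool" where
  "share_last p q \<longleftrightarrow> snd p \<noteq> [] \<and> snd q \<noteq> [] \<and> last (snd p) = last (snd q)"

definition in_P :: "nat \<Rightarrow> nat \<Rightarrow> arrow set \<Rightarrow> path \<Rightarrow> bool" where
  "in_P d r A q \<longleftrightarrow> valid_path r A q \<and>
     (\<exists>p1 p2. dW d r A q = {p1, p2} \<and> p1 \<noteq> p2 \<and> \<not> share_first p1 p2 \<and> \<not> share_last p1 p2)"

definition JW_gens :: "nat \<Rightarrow> nat \<Rightarrow> arrow set \<Rightarrow> (path \<Rightarrow> 'k::field) set" where
  "JW_gens d r A = {(\<lambda>x. pvec p1 x - pvec p2 x) | p1 p2. \<exists>q. in_P d r A q \<and> dW d r A q = {p1, p2}}"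

definition consistent :: "'k::field itself \<Rightarrow> nat \<Rightarrow> nat \<Rightarrow> (nat \<Rightarrow> nat \<Rightarrow> int) \<Rightarrow> nat
    \<Rightarrow> (nat \<Rightarrow> nat \<Rightarrow> int) \<Rightarrow> bool" where
  "consistent (TYPE('k)) n d v r D' \<longleftrightarrow>
     (let A = arrows n d v r D' in
       (gen_ideal r A (JW_gens d r A) :: (path \<Rightarrow> 'k) set) = gen_ideal r A (JE_gens r A))"

end

theory Submission
  imports Defs
begin

text \<open>Suppose an arrow \<open>a: i \<rightarrow> j\<close> had a label exceeding 1 at some ray. Composing \<open>a\<close> with
anticanonical cycles at \<open>i\<close> and at \<open>j\<close> gives two parallel paths with the same label, so their
difference lies in \<open>J\<^sub>\<E>\<close>, hence in \<open>J\<^sub>W\<close> by consistency. But every path occurring in some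
\<open>\<partial>\<^sub>qW\<close> divides the anticanonical monomial, so it never contains \<open>a\<close>. Consequently, for any set of
paths that is closed under replacing a subpath \<open>p\<^sup>+\<close> by \<open>p\<^sup>-\<close>, the sum of coefficients over
that set vanishes on all of \<open>J\<^sub>W\<close>. The set of paths beginning with \<open>a\<close> is such a set, and it
contains exactly one of the two parallel paths: a contradiction.\<close>

definition supp :: "('a \<Rightarrow> 'k::zero) \<Rightarrow> 'a set" where
  "supp f = {p. f p \<noteq> 0}"

definition coeff_sum :: "path set \<Rightarrow> (path \<Rightarrow> 'k::field) \<Rightarrow> 'k" where
  "coeff_sum D f = sum f (D \<inter> supp f)"

definition concat_path :: "path \<Rightarrow> path \<Rightarrow> path" where
  "concat_path t s = (fst t, snd t @ snd s)"

definition factorisations :: "path \<Rightarrow> (path \<times> path) set" where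
  "factorisations z = {(t, s). fst t = fst z \<and> snd t @ snd s = snd z \<and> fst s = phead t}"

lemma coeff_sum_eq_sum_superset:
  assumes "finite S" "supp f \<subseteq> S"
  shows "coeff_sum D f = sum f (D \<inter> S)"
  unfolding coeff_sum_def
  by (rule sum.mono_neutral_left) (use assms in \<open>auto simp: supp_def\<close>)

lemma pmul_eq_sum_factorisations:
  "pmul g1 g2 z = (\<Sum>(t, s)\<in>factorisations z. g1 s * g2 t)"
proof -
  obtain x as where z: "z = (x, as)" by (cases z)
  show ?thesis
    unfolding z pmul.simps
    by (rule sum.reindex_bij_witness[where i = "\<lambda>(t, s). length (snd t)"
          and j = "\<lambda>k. ((x, take k as), (phead (x, take k as), drop k as))"])
       (auto simp: factorisations_def)
qed

lemma finite_factorisations: "finite (factorisations z)"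
proof -
  obtain x as where z: "z = (x, as)" by (cases z)
  have "factorisations z \<subseteq> (\<lambda>k. ((x, take k as), (phead (x, take k as), drop k as))) ` {0..length as}"
  proof
    fix p assume p: "p \<in> factorisations z"
    obtain y t w s where pp: "p = ((y, t), (w, s))" by (metis prod.exhaust)
    have "y = x" "t @ s = as" "w = phead (y, t)" using p by (auto simp: factorisations_def z pp)
    then show "p \<in> (\<lambda>k. ((x, take k as), (phead (x, take k as), drop k as))) ` {0..length as}"
      by (intro image_eqI[where x = "length t"]) (auto simp: pp)
  qed
  then show ?thesis by (rule finite_subset) simp
qed

lemma supp_pmul_subset:
  "supp (pmul g1 g2) \<subseteq> (\<lambda>(t, s). concat_path t s) ` (supp g2 \<times> supp g1)"
proof
  fix z assume "z \<in> supp (pmul g1 g2)"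
  then have "(\<Sum>(t, s)\<in>factorisations z. g1 s * g2 t) \<noteq> 0"
    by (simp add: supp_def pmul_eq_sum_factorisations)
  then obtain t s where ts: "(t, s) \<in> factorisations z" "g1 s * g2 t \<noteq> 0"
    using sum.not_neutral_contains_not_neutral by (metis (no_types, lifting) case_prod_conv prod.exhaust)
  have "z = concat_path t s" using ts(1) by (cases z) (auto simp: factorisations_def concat_path_def)
  then show "z \<in> (\<lambda>(t, s). concat_path t s) ` (supp g2 \<times> supp g1)"
    using ts(2) by (auto simp: supp_def)
qed

lemma finite_supp_pmul:
  "finite (supp g1) \<Longrightarrow> finite (supp g2) \<Longrightarrow> finite (supp (pmul g1 g2))"
  by (rule finite_subset[OF supp_pmul_subset]) simp

lemma finite_supp_add:
  fixes f g :: "'a \<Rightarrow> 'k::monoid_add"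
  shows "finite (supp f) \<Longrightarrow> finite (supp g) \<Longrightarrow> finite (supp (\<lambda>p. f p + g p))"
  by (rule finite_subset[of _ "supp f \<union> supp g"]) (auto simp: supp_def)

definition paths_before :: "path \<Rightarrow> path set \<Rightarrow> path set" where
  "paths_before s D = {t. fst s = phead t \<and> concat_path t s \<in> D}"

definition paths_after :: "path \<Rightarrow> path set \<Rightarrow> path set" where
  "paths_after t D = {s. fst s = phead t \<and> concat_path t s \<in> D}"

lemma coeff_sum_pmul:
  assumes f1: "finite (supp g1)" and f2: "finite (supp g2)"
  shows "coeff_sum D (pmul g1 g2) = (\<Sum>t\<in>supp g2. \<Sum>s\<in>supp g1.
            if fst s = phead t \<and> concat_path t s \<in> D then g1 s * g2 t else 0)"
proof -
  define Z where "Z = (\<lambda>(t, s). concat_path t s) ` (supp g2 \<times> supp g1)"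
  define P where "P = {(t, s) \<in> supp g2 \<times> supp g1. fst s = phead t \<and> concat_path t s \<in> D}"
  have fZ: "finite Z" using f1 f2 by (simp add: Z_def)
  have fP: "finite P" using f1 f2 by (auto simp: P_def intro: finite_subset[of _ "supp g2 \<times> supp g1"])
  have "coeff_sum D (pmul g1 g2) = sum (pmul g1 g2) (D \<inter> Z)"
    by (rule coeff_sum_eq_sum_superset[OF fZ]) (use supp_pmul_subset in \<open>auto simp: Z_def\<close>)
  also have "\<dots> = (\<Sum>z\<in>D \<inter> Z. \<Sum>(t, s)\<in>{p\<in>P. case_prod concat_path p = z}. g1 s * g2 t)"
  proof (rule sum.cong[OF refl])
    fix z assume z: "z \<in> D \<inter> Z"
    show "pmul g1 g2 z = (\<Sum>(t, s)\<in>{p\<in>P. case_prod concat_path p = z}. g1 s * g2 t)"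
      unfolding pmul_eq_sum_factorisations
      by (rule sum.mono_neutral_right[OF finite_factorisations])
         (use z in \<open>auto simp: P_def concat_path_def factorisations_def supp_def\<close>)
  qed
  also have "\<dots> = (\<Sum>(t, s)\<in>P. g1 s * g2 t)"
    by (rule sum.group[OF fP]) (use fZ in \<open>force simp: P_def Z_def\<close>)+
  also have "\<dots> = (\<Sum>(t, s)\<in>supp g2 \<times> supp g1.
      if fst s = phead t \<and> concat_path t s \<in> D then g1 s * g2 t else 0)"
  proof -
    have "P = (supp g2 \<times> supp g1) \<inter> {(t, s). fst s = phead t \<and> concat_path t s \<in> D}"
      by (auto simp: P_def)
    then show ?thesis
      using f1 f2 by (simp add: sum.inter_restrict case_prod_beta)
  qed
  finally show ?thesis by (simp add: sum.cartesian_product)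
qed

lemma coeff_sum_eq_sum_if:
  "finite (supp f) \<Longrightarrow> coeff_sum D f = (\<Sum>p\<in>supp f. if p \<in> D then f p else 0)"
  unfolding coeff_sum_def by (subst Int_commute) (rule sum.inter_restrict)

lemma coeff_sum_pmul_after:
  assumes "finite (supp g1)" "finite (supp g2)"
  shows "coeff_sum D (pmul g1 g2) = (\<Sum>t\<in>supp g2. g2 t * coeff_sum (paths_after t D) g1)"
  unfolding coeff_sum_pmul[OF assms] coeff_sum_eq_sum_if[OF assms(1)] paths_after_def
  by (auto simp: sum_distrib_left mult.commute intro!: sum.cong)

lemma coeff_sum_pmul_before:
  assumes "finite (supp g1)" "finite (supp g2)"
  shows "coeff_sum D (pmul g1 g2) = (\<Sum>s\<in>supp g1. g1 s * coeff_sum (paths_before s D) g2)"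
  unfolding coeff_sum_pmul[OF assms] coeff_sum_eq_sum_if[OF assms(2)] paths_before_def
  by (subst sum.swap) (auto simp: sum_distrib_left intro!: sum.cong)

definition W_pairs :: "nat \<Rightarrow> nat \<Rightarrow> arrow set \<Rightarrow> (path \<times> path) set" where
  "W_pairs d r A = {(p1, p2). \<exists>q. in_P d r A q \<and> dW d r A q = {p1, p2}}"

definition W_saturated :: "nat \<Rightarrow> nat \<Rightarrow> arrow set \<Rightarrow> path set \<Rightarrow> bool" where
  "W_saturated d r A D \<longleftrightarrow> (\<forall>(p1, p2)\<in>W_pairs d r A.
      \<forall>x us ws. (x, us @ snd p1 @ ws) \<in> D \<longleftrightarrow> (x, us @ snd p2 @ ws) \<in> D)"

lemma W_pairs_sym: "(p1, p2) \<in> W_pairs d r A \<Longrightarrow> (p2, p1) \<in> W_pairs d r A"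
  by (auto simp: W_pairs_def insert_commute)

lemma label_le_pdiv: "b \<in> set (snd p) \<Longrightarrow> snd (snd b) \<rho> \<le> pdiv p \<rho>"
  by (cases p) (auto intro: member_le_sum_list)

lemma dW_member_nonempty:
  assumes pos: "\<forall>b\<in>A. \<exists>\<rho><d. 0 < snd (snd b) \<rho>"
    and p1: "p1 \<in> dW d r A q" and p2: "p2 \<in> dW d r A q" and ne: "p1 \<noteq> p2"
  shows "snd p1 \<noteq> []"
proof
  assume e: "snd p1 = []"
  obtain x1 where x1: "p1 = (x1, [])" using e by (cases p1) auto
  have "\<forall>\<rho><d. pdiv q \<rho> = 1" using p1 unfolding dW_def x1 by auto
  then have zero: "\<forall>\<rho><d. pdiv p2 \<rho> = 0" using p2 unfolding dW_def by auto
  obtain x2 as2 where x2: "p2 = (x2, as2)" by (cases p2)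
  have "as2 = []"
  proof (rule ccontr)
    assume "as2 \<noteq> []"
    then have "hd as2 \<in> A" using p2 unfolding dW_def x2 by auto
    then obtain \<rho> where "\<rho> < d" "0 < snd (snd (hd as2)) \<rho>" using pos by blast
    moreover have "snd (snd (hd as2)) \<rho> \<le> pdiv p2 \<rho>"
      by (rule label_le_pdiv) (use \<open>as2 \<noteq> []\<close> in \<open>simp add: x2\<close>)
    ultimately show False using zero by force
  qed
  then show False using p1 p2 ne unfolding dW_def x1 x2 by auto
qed

lemma W_pair_nonempty:
  assumes "\<forall>b\<in>A. \<exists>\<rho><d. 0 < snd (snd b) \<rho>" and "(p1, p2) \<in> W_pairs d r A"
  shows "snd p1 \<noteq> []"
proof -
  obtain q where q: "in_P d r A q" "dW d r A q = {p1, p2}" using assms(2) by (auto simp: W_pairs_def)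
  then have "p1 \<noteq> p2" unfolding in_P_def by (metis doubleton_eq_iff insert_absorb2)
  then show ?thesis using dW_member_nonempty[OF assms(1)] q(2) by blast
qed

lemma W_pair_same_ends:
  assumes "(p1, p2) \<in> W_pairs d r A"
  shows "ptail p1 = ptail p2" "phead p1 = phead p2"
proof -
  obtain q where "dW d r A q = {p1, p2}" using assms by (auto simp: W_pairs_def)
  then have "p1 \<in> dW d r A q" "p2 \<in> dW d r A q" by auto
  then show "ptail p1 = ptail p2" "phead p1 = phead p2" unfolding dW_def by auto
qed

lemma W_pair_label_le_one:
  assumes "(p1, p2) \<in> W_pairs d r A" "b \<in> set (snd p1)" "\<rho> < d"
  shows "snd (snd b) \<rho> \<le> 1"
proof -
  obtain q where "p1 \<in> dW d r A q" using assms(1) by (auto simp: W_pairs_def)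
  then have "pdiv p1 \<rho> \<le> 1" using assms(3) unfolding dW_def by force
  then show ?thesis using label_le_pdiv[OF assms(2), of \<rho>] by linarith
qed

lemma W_saturated_pair:
  assumes "W_saturated d r A D" "(p1, p2) \<in> W_pairs d r A"
  shows "p1 \<in> D \<longleftrightarrow> p2 \<in> D"
proof -
  have "(fst p1, [] @ snd p1 @ []) \<in> D \<longleftrightarrow> (fst p1, [] @ snd p2 @ []) \<in> D"
    using assms unfolding W_saturated_def by blast
  moreover have "fst p1 = fst p2"
    using W_pair_same_ends(1)[OF assms(2)] by (cases p1, cases p2) simp
  ultimately show ?thesis by (cases p1, cases p2) simp
qed

lemma W_saturated_paths_before:
  assumes pos: "\<forall>b\<in>A. \<exists>\<rho><d. 0 < snd (snd b) \<rho>" and D: "W_saturated d r A D"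
  shows "W_saturated d r A (paths_before s D)"
  unfolding W_saturated_def
proof (intro ballI allI, clarify)
  fix p1 p2 x us ws assume w: "(p1, p2) \<in> W_pairs d r A"
  have "phead p1 = phead p2" by (rule W_pair_same_ends(2)[OF w])
  then have heads: "phead (x, us @ snd p1 @ ws) = phead (x, us @ snd p2 @ ws)"
    using W_pair_nonempty[OF pos w] W_pair_nonempty[OF pos W_pairs_sym[OF w]]
    by (cases p1, cases p2, cases "ws = []") auto
  have "(x, us @ snd p1 @ (ws @ snd s)) \<in> D \<longleftrightarrow> (x, us @ snd p2 @ (ws @ snd s)) \<in> D"
    using D w unfolding W_saturated_def by blast
  then show "(x, us @ snd p1 @ ws) \<in> paths_before s D \<longleftrightarrow> (x, us @ snd p2 @ ws) \<in> paths_before s D"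
    using heads by (simp add: paths_before_def concat_path_def)
qed

lemma W_saturated_paths_after:
  assumes D: "W_saturated d r A D"
  shows "W_saturated d r A (paths_after t D)"
  unfolding W_saturated_def
proof (intro ballI allI, clarify)
  fix p1 p2 x us ws assume w: "(p1, p2) \<in> W_pairs d r A"
  have "(fst t, (snd t @ us) @ snd p1 @ ws) \<in> D \<longleftrightarrow> (fst t, (snd t @ us) @ snd p2 @ ws) \<in> D"
    using D w unfolding W_saturated_def by blast
  then show "(x, us @ snd p1 @ ws) \<in> paths_after t D \<longleftrightarrow> (x, us @ snd p2 @ ws) \<in> paths_after t D"
    by (simp add: paths_after_def concat_path_def)
qed

lemma coeff_sum_JW_gen:
  assumes "W_saturated d r A D" "(p1, p2) \<in> W_pairs d r A"
  shows "coeff_sum D (\<lambda>x. pvec p1 x - pvec p2 x :: 'k::field) = 0"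
proof -
  have e: "p1 \<in> D \<longleftrightarrow> p2 \<in> D" by (rule W_saturated_pair[OF assms])
  have "coeff_sum D (\<lambda>x. pvec p1 x - pvec p2 x :: 'k) = (\<Sum>x\<in>D \<inter> {p1, p2}. pvec p1 x - pvec p2 x)"
    by (rule coeff_sum_eq_sum_superset) (auto simp: supp_def pvec_def)
  also have "\<dots> = 0"
    using e by (cases "p1 \<in> D"; cases "p1 = p2") (auto simp: pvec_def Int_insert_left)
  finally show ?thesis .
qed

lemma coeff_sum_JW_ideal:
  assumes pos: "\<forall>b\<in>A. \<exists>\<rho><d. 0 < snd (snd b) \<rho>"
    and f: "(f :: path \<Rightarrow> 'k::field) \<in> gen_ideal r A (JW_gens d r A)"
  shows "finite (supp f) \<and> (\<forall>D. W_saturated d r A D \<longrightarrow> coeff_sum D f = 0)"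
  using f
proof (induction rule: gen_ideal.induct)
  case (gen g)
  then obtain p1 p2 where g: "g = (\<lambda>x. pvec p1 x - pvec p2 x)" "(p1, p2) \<in> W_pairs d r A"
    unfolding JW_gens_def W_pairs_def by blast
  have "finite (supp g)" by (rule finite_subset[of _ "{p1, p2}"]) (auto simp: supp_def g pvec_def)
  then show ?case using coeff_sum_JW_gen[OF _ g(2)] g(1) by blast
next
  case zero
  then show ?case by (simp add: supp_def coeff_sum_def)
next
  case (add f g)
  let ?S = "supp f \<union> supp g"
  have fin: "finite ?S" using add by simp
  have "supp (\<lambda>p. f p + g p) \<subseteq> ?S" by (auto simp: supp_def)
  then have "coeff_sum D (\<lambda>p. f p + g p) = coeff_sum D f + coeff_sum D g" for D
    by (simp add: coeff_sum_eq_sum_superset[OF fin] sum.distrib)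
  then show ?case using add finite_supp_add by auto
next
  case (lmul f h)
  have "finite (supp h)" using lmul(2) unfolding path_alg_def supp_def by auto
  then show ?case
    using lmul.IH W_saturated_paths_before[OF pos]
    by (simp add: coeff_sum_pmul_before finite_supp_pmul)
next
  case (rmul f h)
  have "finite (supp h)" using rmul(2) unfolding path_alg_def supp_def by auto
  then show ?case
    using rmul.IH W_saturated_paths_after by (simp add: coeff_sum_pmul_after finite_supp_pmul)
qed

lemma valid_path_iff_successively:
  "valid_path r A (x, as) \<longleftrightarrow> x \<le> r \<and> set as \<subseteq> A \<and> (as \<noteq> [] \<longrightarrow> fst (hd as) = x) \<and>
     successively (\<lambda>a b. fst (snd a) = fst b) as"
  by (simp add: successively_conv_nth)

lemma valid_path_append:
  assumes "valid_path r A (x, as)" "valid_path r A (y, bs)" "phead (x, as) = y"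
  shows "valid_path r A (x, as @ bs)"
  using assms unfolding valid_path_iff_successively
  by (auto simp: successively_append_iff simp del: valid_path.simps split: if_splits)

lemma pdiv_append: "pdiv (x, as @ bs) \<rho> = pdiv (x, as) \<rho> + pdiv (y, bs) \<rho>"
  by simp

lemma principal_uminus:
  assumes "principal n d v (\<lambda>\<rho>. - D \<rho>)"
  shows "principal n d v D"
proof -
  obtain u where u: "\<forall>\<rho><d. - D \<rho> = pairing n v u \<rho>" using assms unfolding principal_def by blast
  have "\<forall>\<rho><d. D \<rho> = pairing n v (\<lambda>i. - u i) \<rho>"
    using u by (simp add: pairing_def sum_negf) (metis minus_minus)
  then show ?thesis unfolding principal_def by blast
qed

lemma sec_label_zero_principal:
  assumes "sec_label n d v D' i k c" "\<forall>\<rho><d. c \<rho> = 0"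
  shows "principal n d v (\<lambda>\<rho>. D' k \<rho> - D' i \<rho>)"
proof (rule principal_uminus)
  show "principal n d v (\<lambda>\<rho>. - (D' k \<rho> - D' i \<rho>))"
    using assms unfolding sec_label_def principal_def by auto
qed

lemma sum_pos_if_member_pos:
  fixes c :: "nat \<Rightarrow> nat"
  assumes "\<rho> < d" "0 < c \<rho>"
  shows "0 < (\<Sum>\<tau><d. c \<tau>)"
proof -
  have "c \<rho> \<le> (\<Sum>\<tau><d. c \<tau>)" using assms(1) by (intro member_le_sum) auto
  then show ?thesis using assms(2) by linarith
qed

text \<open>Factor the section through intermediate sheaves until all factors are irreducible. The factors
are nonzero because the sheaves are pairwise non-isomorphic, so the total degree decreases.\<close>

lemma sec_label_path:
  assumes distinct: "\<forall>i\<le>r. \<forall>j\<le>r. i \<noteq> j \<longrightarrow> \<not> principal n d v (\<lambda>\<rho>. D' j \<rho> - D' i \<rho>)"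
  shows "i \<le> r \<Longrightarrow> j \<le> r \<Longrightarrow> sec_label n d v D' i j c \<Longrightarrow> \<exists>\<rho><d. 0 < c \<rho> \<Longrightarrow>
    \<exists>as. valid_path r (arrows n d v r D') (i, as) \<and> as \<noteq> [] \<and> phead (i, as) = j \<and> pdiv (i, as) = c"
proof (induction "\<Sum>\<rho><d. c \<rho>" arbitrary: i j c rule: less_induct)
  case less
  show ?case
  proof (cases "irreducible_sec n d v r D' i j c")
    case True
    then have "(i, j, c) \<in> arrows n d v r D'" using less.prems by (auto simp: arrows_def)
    then show ?thesis by (intro exI[where x = "[(i, j, c)]"]) (use less.prems in auto)
  next
    case False
    then obtain k c1 c2 where k: "k \<le> r" "k \<noteq> i" "k \<noteq> j" and s1: "sec_label n d v D' i k c1"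
      and s2: "sec_label n d v D' k j c2" and c: "\<forall>\<rho>. c \<rho> = c1 \<rho> + c2 \<rho>"
      using less.prems(3) unfolding irreducible_sec_def by blast
    have pos1: "\<exists>\<rho><d. 0 < c1 \<rho>"
      using sec_label_zero_principal[OF s1] distinct less.prems(1) k by (metis gr0I)
    have pos2: "\<exists>\<rho><d. 0 < c2 \<rho>"
      using sec_label_zero_principal[OF s2] distinct less.prems(2) k by (metis gr0I)
    have sum: "(\<Sum>\<rho><d. c \<rho>) = (\<Sum>\<rho><d. c1 \<rho>) + (\<Sum>\<rho><d. c2 \<rho>)"
      using c by (simp add: sum.distrib)
    have "0 < (\<Sum>\<rho><d. c1 \<rho>)" "0 < (\<Sum>\<rho><d. c2 \<rho>)"
      using pos1 pos2 sum_pos_if_member_pos by blast+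
    then have smaller: "(\<Sum>\<rho><d. c1 \<rho>) < (\<Sum>\<rho><d. c \<rho>)" "(\<Sum>\<rho><d. c2 \<rho>) < (\<Sum>\<rho><d. c \<rho>)"
      using sum by linarith+
    obtain as1 where p1: "valid_path r (arrows n d v r D') (i, as1)" "as1 \<noteq> []"
        "phead (i, as1) = k" "pdiv (i, as1) = c1"
      using less.hyps[OF smaller(1) less.prems(1) k(1) s1 pos1] by blast
    obtain as2 where p2: "valid_path r (arrows n d v r D') (k, as2)" "as2 \<noteq> []"
        "phead (k, as2) = j" "pdiv (k, as2) = c2"
      using less.hyps[OF smaller(2) k(1) less.prems(2) s2 pos2] by blast
    show ?thesis
    proof (intro exI[of _ "as1 @ as2"] conjI)
      show "valid_path r (arrows n d v r D') (i, as1 @ as2)"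
        by (rule valid_path_append[OF p1(1) p2(1) p1(3)])
      show "as1 @ as2 \<noteq> []" using p1(2) by simp
      show "phead (i, as1 @ as2) = j" using p2(2,3) by simp
      show "pdiv (i, as1 @ as2) = c"
        by (rule ext) (simp only: pdiv_append[where y = k] p1(4) p2(4) c)
    qed
  qed
qed

lemma arrows_label_pos: "b \<in> arrows n d v r D' \<Longrightarrow> \<exists>\<rho><d. 0 < snd (snd b) \<rho>"
proof -
  assume b: "b \<in> arrows n d v r D'"
  obtain i j c where bb: "b = (i, j, c)" by (cases b) auto
  have "c \<noteq> (\<lambda>_. 0)" "\<forall>\<rho>\<ge>d. c \<rho> = 0"
    using b by (auto simp: bb arrows_def irreducible_sec_def sec_label_def)
  then obtain \<rho> where "c \<rho> \<noteq> 0" "\<rho> < d" by (metis not_le)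
  then show ?thesis by (auto simp: bb)
qed

definition anticanonical :: "nat \<Rightarrow> label" where
  "anticanonical d \<rho> = (if \<rho> < d then 1 else 0)"

lemma anticanonical_cycle:
  assumes gor: "gorenstein n d v"
    and distinct: "\<forall>i\<le>r. \<forall>j\<le>r. i \<noteq> j \<longrightarrow> \<not> principal n d v (\<lambda>\<rho>. D' j \<rho> - D' i \<rho>)"
    and "i \<le> r" "0 < d"
  obtains as where "valid_path r (arrows n d v r D') (i, as)" "as \<noteq> []" "phead (i, as) = i"
    "pdiv (i, as) = anticanonical d"
proof -
  obtain u where u: "\<forall>\<rho><d. pairing n v u \<rho> = 1" using gor unfolding gorenstein_def by blast
  have "sec_label n d v D' i i (anticanonical d)"
    unfolding sec_label_def principal_def anticanonical_def using u by auto
  moreover have "\<exists>\<rho><d. 0 < anticanonical d \<rho>" using \<open>0 < d\<close> by (auto simp: anticanonical_def)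
  ultimately show ?thesis using sec_label_path[OF distinct \<open>i \<le> r\<close> \<open>i \<le> r\<close>] that by blast
qed

lemma anticanonical_path_label_le_one:
  assumes "pdiv p = anticanonical d" "b \<in> set (snd p)"
  shows "snd (snd b) \<rho> \<le> 1"
  using label_le_pdiv[OF assms(2), of \<rho>] assms(1) by (simp add: anticanonical_def split: if_splits)

definition paths_starting_with :: "arrow \<Rightarrow> path set" where
  "paths_starting_with a = {z. snd z \<noteq> [] \<and> hd (snd z) = a}"

lemma W_saturated_paths_starting_with:
  assumes pos: "\<forall>b\<in>A. \<exists>\<rho><d. 0 < snd (snd b) \<rho>" and "\<rho> < d" "1 < snd (snd a) \<rho>"
  shows "W_saturated d r A (paths_starting_with a)"
  unfolding W_saturated_def
proof (intro ballI allI, clarify)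
  fix p1 p2 x us ws assume w: "(p1, p2) \<in> W_pairs d r A"
  have "snd q \<noteq> [] \<and> hd (snd q) \<noteq> a" if "(q, q') \<in> W_pairs d r A" for q q'
    using W_pair_nonempty[OF pos that] W_pair_label_le_one[OF that hd_in_set \<open>\<rho> < d\<close>] assms(3)
    by auto
  then have "snd p1 \<noteq> []" "snd p2 \<noteq> []" "hd (snd p1) \<noteq> a" "hd (snd p2) \<noteq> a"
    using w W_pairs_sym[OF w] by blast+
  then show "(x, us @ snd p1 @ ws) \<in> paths_starting_with a \<longleftrightarrow>
      (x, us @ snd p2 @ ws) \<in> paths_starting_with a"
    by (cases us) (auto simp: paths_starting_with_def)
qed

lemma JE_gen_arrow_through_cycles:
  assumes L: "valid_path r A (i, L)" "phead (i, L) = i"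
    and R: "valid_path r A (j, R)" "R \<noteq> []" "phead (j, R) = j"
    and same_label: "pdiv (i, L) = pdiv (j, R)" and a: "(i, j, c) \<in> A"
  shows "(\<lambda>x. pvec (i, L @ [(i, j, c)]) x - pvec (i, (i, j, c) # R) x) \<in> JE_gens r A"
proof -
  have "i \<le> r" using L(1) by simp
  then have arrow: "valid_path r A (i, [(i, j, c)])" using a by simp
  have v1: "valid_path r A (i, L @ [(i, j, c)])" by (rule valid_path_append[OF L(1) arrow L(2)])
  have v2: "valid_path r A (i, (i, j, c) # R)"
    using valid_path_append[OF arrow R(1)] by simp
  have h: "phead (i, L @ [(i, j, c)]) = phead (i, (i, j, c) # R)" using R(2,3) by simp
  have label: "pdiv (i, L @ [(i, j, c)]) = pdiv (i, (i, j, c) # R)"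
  proof
    fix \<rho>
    show "pdiv (i, L @ [(i, j, c)]) \<rho> = pdiv (i, (i, j, c) # R) \<rho>"
      using fun_cong[OF same_label, of \<rho>] by simp
  qed
  have t: "ptail (i, L @ [(i, j, c)]) = ptail (i, (i, j, c) # R)" by simp
  show ?thesis
    unfolding JE_gens_def mem_Collect_eq
    by (intro exI[of _ "(i, L @ [(i, j, c)])"] exI[of _ "(i, (i, j, c) # R)"] conjI refl v1 v2 t h label)
qed

lemma coeff_sum_pvec_diff:
  assumes "p \<notin> D" "q \<in> D"
  shows "coeff_sum D (\<lambda>x. pvec p x - pvec q x :: 'k::field) = -1"
proof -
  have "coeff_sum D (\<lambda>x. pvec p x - pvec q x :: 'k) = (\<Sum>x\<in>D \<inter> {p, q}. pvec p x - pvec q x)"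
    by (rule coeff_sum_eq_sum_superset) (auto simp: supp_def pvec_def)
  also have "D \<inter> {p, q} = {q}" using assms by auto
  finally show ?thesis using assms by (auto simp: pvec_def)
qed

theorem proposition3p6:
  fixes n d r :: nat
    and v :: "nat \<Rightarrow> nat \<Rightarrow> int"
    and D' :: "nat \<Rightarrow> nat \<Rightarrow> int"
  assumes cone: "toric_cone_data n d v"
    and gor: "gorenstein n d v"
    and E0: "principal n d v (D' 0)"
    and distinct: "\<forall>i\<le>r. \<forall>j\<le>r. i \<noteq> j \<longrightarrow> \<not> principal n d v (\<lambda>\<rho>. D' j \<rho> - D' i \<rho>)"
    and cons: "consistent TYPE('k::alg_closed_field) n d v r D'"
  shows "\<forall>a\<in>arrows n d v r D'. \<forall>\<rho><d. snd (snd a) \<rho> \<le> 1"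
proof (intro ballI allI impI, rule ccontr)
  fix a \<rho> assume a: "a \<in> arrows n d v r D'" and \<rho>: "\<rho> < d" and big: "\<not> snd (snd a) \<rho> \<le> 1"
  define A where "A = arrows n d v r D'"
  have pos: "\<forall>b\<in>A. \<exists>\<rho><d. 0 < snd (snd b) \<rho>" using arrows_label_pos unfolding A_def by blast
  obtain i j c where a_eq: "a = (i, j, c)" by (cases a)
  have "i \<le> r" "j \<le> r" "0 < d" using a \<rho> by (auto simp: a_eq arrows_def)
  obtain L where L: "valid_path r A (i, L)" "L \<noteq> []" "phead (i, L) = i" "pdiv (i, L) = anticanonical d"
    using anticanonical_cycle[OF gor distinct \<open>i \<le> r\<close> \<open>0 < d\<close>] unfolding A_def by blast
  obtain R where R: "valid_path r A (j, R)" "R \<noteq> []" "phead (j, R) = j" "pdiv (j, R) = anticanonical d"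
    using anticanonical_cycle[OF gor distinct \<open>j \<le> r\<close> \<open>0 < d\<close>] unfolding A_def by blast
  let ?g = "\<lambda>x. pvec (i, L @ [a]) x - pvec (i, a # R) x :: 'k"
  have "?g \<in> JE_gens r A"
    using JE_gen_arrow_through_cycles[OF L(1,3) R(1-3)] L(4) R(4) a by (simp add: a_eq A_def)
  then have "?g \<in> gen_ideal r A (JW_gens d r A)"
    using cons gen_ideal.gen unfolding consistent_def Let_def A_def by blast
  moreover have "W_saturated d r A (paths_starting_with a)"
    using W_saturated_paths_starting_with[OF pos \<rho>] big by simp
  ultimately have "coeff_sum (paths_starting_with a) ?g = 0"
    using coeff_sum_JW_ideal[OF pos] by blast
  moreover have "hd L \<noteq> a" using anticanonical_path_label_le_one[OF L(4), of "hd L" \<rho>] L(2) big by auto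
  then have "coeff_sum (paths_starting_with a) ?g = -1"
    using L(2) by (intro coeff_sum_pvec_diff) (auto simp: paths_starting_with_def)
  ultimately show False by simp
qed

end
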